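(* Let $n\ge 4$, $N=\{1,\dots,n\}$, fix $i_1\in N$ and let $\hat N^c=N\setminus\{i_1\}$. Then the inequality $$\sum_{j\in\hat N^c}\left(x_{i_1j}+x_{ji_1}\right)-\sum_{j,j'\in\hat N^c:\,j\ne j'} x_{jj'}\le 2-\frac{(n-2)(n-3)}{2}$$ defines a facet of the weak order polytope $P^n_{WO}$.
   Context: Let $N=\{1,\dots,n\}$ and $A_N=\{(i,j): i,j\in N, i\ne j\}$. A weak order on $N$ is a binary relation $W\subseteq N\times N$ that is reflexive, transitive and total; $(i,j)\in W$ is read "$i$ is preferred over or tied with $j$". The characteristic vector of $W$ is $x^W\in\{0,1\}^{A_N}$ with $x^W_{(i,j)}=1$ if $(i,j)\in W$ and $0$ otherwise. The weak order polytope $P^n_{WO}$ is the convex hull of the characteristic vectors of all weak orders on $N$; its points are vectors $x\in\mathbb{R}^{A_N}$ and $x_{ij}$ denotes the coordinate $x_{(i,j)}$. $P^n_{WO}$ has dimension $n(n-1)$. An inequality $\pi x\le\pi_0$ defines a facet of a polytope $P$ if it is valid for $P$ (holds for all $x\in P$) and the face $P\cap\{x:\pi x=\pi_0\}$ is nonempty, proper, and contains $\dim(P)$ affinely independent points (i.e. has dimension $\dim(P)-1$). *)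

theory Defs
  imports Main "HOL-Library.Function_Algebras" Complex_Main
begin

definition arcs :: "nat \<Rightarrow> (nat \<times> nat) set" where
  "arcs n = {(i,j). i \<in> {1..n} \<and> j \<in> {1..n} \<and> i \<noteq> j}"

definition weak_order :: "nat \<Rightarrow> (nat \<times> nat) set \<Rightarrow> bool" where
  "weak_order n W \<longleftrightarrow> W \<subseteq> {1..n} \<times> {1..n} \<and> refl_on {1..n} W \<and> trans W
     \<and> total_on {1..n} W"

text \<open>Points of R^{A_N} are functions (nat*nat) => real vanishing outside A_N.\<close>
definition char_vec :: "nat \<Rightarrow> (nat \<times> nat) set \<Rightarrow> (nat \<times> nat \<Rightarrow> real)" where
  "char_vec n W = (\<lambda>a. if a \<in> arcs n \<and> a \<in> W then 1 else 0)"

definition conv_hull :: "('a \<Rightarrow> real) set \<Rightarrow> ('a \<Rightarrow> real) set" where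
  "conv_hull S = {x. \<exists>T c. finite T \<and> T \<subseteq> S \<and> T \<noteq> {} \<and> (\<forall>t\<in>T. c t \<ge> 0)
      \<and> (\<Sum>t\<in>T. c t) = 1 \<and> x = (\<lambda>a. \<Sum>t\<in>T. c t * t a)}"

definition aff_indep :: "('a \<Rightarrow> real) set \<Rightarrow> bool" where
  "aff_indep T \<longleftrightarrow> finite T \<and> (\<forall>\<mu>. (\<Sum>t\<in>T. \<mu> t) = 0 \<and> (\<forall>a. (\<Sum>t\<in>T. \<mu> t * t a) = 0)
      \<longrightarrow> (\<forall>t\<in>T. \<mu> t = 0))"

definition pdim :: "('a \<Rightarrow> real) set \<Rightarrow> nat" where
  "pdim P = (GREATEST k. \<exists>T. T \<subseteq> P \<and> aff_indep T \<and> card T = k) - 1"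

definition weak_order_polytope :: "nat \<Rightarrow> (nat \<times> nat \<Rightarrow> real) set" where
  "weak_order_polytope n = conv_hull {char_vec n W | W. weak_order n W}"

definition defines_facet ::
  "nat \<Rightarrow> (nat \<times> nat \<Rightarrow> real) \<Rightarrow> real \<Rightarrow> (nat \<times> nat \<Rightarrow> real) set \<Rightarrow> bool" where
  "defines_facet n \<pi> \<pi>0 P \<longleftrightarrow>
     (let F = {x \<in> P. (\<Sum>a\<in>arcs n. \<pi> a * x a) = \<pi>0} in
       (\<forall>x\<in>P. (\<Sum>a\<in>arcs n. \<pi> a * x a) \<le> \<pi>0) \<and> F \<noteq> {} \<and> F \<noteq> P \<and>
       (\<exists>T. T \<subseteq> F \<and> aff_indep T \<and> card T = pdim P))"

end

theory Submission
  imports Defs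
begin

(*
  Write pi for the coefficient vector and T(W) for the arcs tied in a weak order W. Since pi is
  symmetric, 2 pi x^W is the sum of pi over all arcs, which is (n - 1)(4 - n), plus the sum of pi
  over T(W). The tied arcs inside the tie class C of i1 contribute (|C| - 1)(4 - |C|) <= 2 and all
  other tied arcs contribute -1, which gives validity; the face consists of the weak orders in
  which i1 is tied with one or two other elements and nothing else is tied.

  For the facet property it suffices (the polytope being full-dimensional) to show that every
  equation c x = c0 valid on the face is a multiple of pi. Comparing face vertices that differ in
  exactly two arcs gives c(p,q) = c(q,p), c(k,i1) + c(k,j) = 0 and c(i1,k) + c(j,k) = 0 for
  distinct p, q, j, k other than i1, from which c = c(i1,j) pi follows.
*)

section \<open>Affine independence and facets\<close>

abbreviation lin_form :: "'a set \<Rightarrow> ('a \<Rightarrow> real) \<Rightarrow> ('a \<Rightarrow> real) \<Rightarrow> real" where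
  "lin_form A c x \<equiv> \<Sum>a\<in>A. c a * x a"

lemma homogeneous_system_nontrivial_solution:
  fixes v :: "'i \<Rightarrow> 'e \<Rightarrow> real"
  assumes "finite E" "finite I" "card E < card I"
  shows "\<exists>\<mu>. (\<exists>i\<in>I. \<mu> i \<noteq> 0) \<and> (\<forall>e\<in>E. (\<Sum>i\<in>I. \<mu> i * v i e) = 0)"
  using assms
proof (induction E arbitrary: I v rule: finite_induct)
  case empty
  then obtain i where "i \<in> I" by fastforce
  then show ?case by (intro exI[of _ "\<lambda>_. 1"]) auto
next
  case (insert e E)
  show ?case
  proof (cases "\<forall>i\<in>I. v i e = 0")
    case True
    from insert have "card E < card I" by simp
    with insert.IH[OF insert.prems(1)] True show ?thesis by auto
  next
    case False
    then obtain i0 where i0: "i0 \<in> I" "v i0 e \<noteq> 0" by auto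
    \<comment> \<open>Gaussian elimination: the unknown i0 is used to clear the equation e from the others.\<close>
    define I' where "I' = I - {i0}"
    define w where "w = (\<lambda>i f. v i f - v i e / v i0 e * v i0 f)"
    from insert i0 have "card E < card I'" by (simp add: I'_def)
    with insert.IH[of I' w] insert.prems(1) obtain \<mu>' where
      nz: "\<exists>i\<in>I'. \<mu>' i \<noteq> 0" and sol: "\<forall>f\<in>E. (\<Sum>i\<in>I'. \<mu>' i * w i f) = 0"
      by (auto simp: I'_def)
    define \<mu> where "\<mu> = (\<lambda>i. if i = i0 then - (\<Sum>j\<in>I'. \<mu>' j * v j e) / v i0 e else \<mu>' i)"
    have reduce: "(\<Sum>i\<in>I. \<mu> i * v i f) = (\<Sum>i\<in>I'. \<mu>' i * w i f)" for f
    proof -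
      have "(\<Sum>i\<in>I. \<mu> i * v i f) = \<mu> i0 * v i0 f + (\<Sum>i\<in>I'. \<mu>' i * v i f)"
        using i0 insert.prems(1) by (simp add: I'_def \<mu>_def sum.remove)
      moreover have "(\<Sum>i\<in>I'. \<mu>' i * w i f)
          = (\<Sum>i\<in>I'. \<mu>' i * v i f) - (\<Sum>j\<in>I'. \<mu>' j * v j e) / v i0 e * v i0 f"
        by (simp add: w_def algebra_simps sum_subtractf sum_distrib_left sum_divide_distrib
            sum_distrib_right)
      ultimately show ?thesis by (simp add: \<mu>_def)
    qed
    have "w i e = 0" for i using i0 by (simp add: w_def)
    with nz sol reduce show ?thesis by (intro exI[of _ \<mu>]) (auto simp: \<mu>_def I'_def)
  qed
qed

lemma aff_indep_subset:
  assumes "aff_indep T" "U \<subseteq> T"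
  shows "aff_indep U"
  unfolding aff_indep_def
proof (intro conjI allI impI ballI)
  have "finite T" using assms(1) by (simp add: aff_indep_def)
  then show "finite U" using assms(2) finite_subset by blast
  fix \<mu> u
  assume dep: "(\<Sum>t\<in>U. \<mu> t) = 0 \<and> (\<forall>a. (\<Sum>t\<in>U. \<mu> t * t a) = 0)" and "u \<in> U"
  define \<mu>' where "\<mu>' t = (if t \<in> U then \<mu> t else 0)" for t
  have "(\<Sum>t\<in>T. \<mu>' t) = (\<Sum>t\<in>U. \<mu> t)" "(\<Sum>t\<in>T. \<mu>' t * t a) = (\<Sum>t\<in>U. \<mu> t * t a)" for a
    using \<open>finite T\<close> assms(2) by (auto simp: \<mu>'_def intro: sum.mono_neutral_cong_right)
  with assms(1) dep \<open>u \<in> U\<close> assms(2) have "\<mu>' u = 0" by (auto simp: aff_indep_def)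
  with \<open>u \<in> U\<close> show "\<mu> u = 0" by (simp add: \<mu>'_def)
qed

lemma aff_indep_card_le:
  assumes "finite A" "aff_indep T" and support: "\<forall>t\<in>T. \<forall>a. a \<notin> A \<longrightarrow> t a = 0"
  shows "card T \<le> card A + 1"
proof (rule ccontr)
  assume "\<not> card T \<le> card A + 1"
  \<comment> \<open>None indexes the equation for the sum of the coefficients.\<close>
  define E where "E = insert None (Some ` A)"
  have "finite E" "card E < card T" "finite T"
    using assms \<open>\<not> card T \<le> _\<close> by (auto simp: E_def card_image aff_indep_def)
  from homogeneous_system_nontrivial_solution[OF this(1,3,2),
      of "\<lambda>t e. case e of None \<Rightarrow> 1 | Some a \<Rightarrow> t a"]
  obtain \<mu> where nz: "\<exists>t\<in>T. \<mu> t \<noteq> 0"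
    and sol: "\<forall>e\<in>E. (\<Sum>t\<in>T. \<mu> t * (case e of None \<Rightarrow> 1 | Some a \<Rightarrow> t a)) = 0"
    by blast
  have "(\<Sum>t\<in>T. \<mu> t) = 0" using sol by (simp add: E_def)
  moreover have "(\<Sum>t\<in>T. \<mu> t * t a) = 0" for a
    using sol support by (cases "a \<in> A") (auto simp: E_def intro: sum.neutral)
  ultimately show False using assms(2) nz by (auto simp: aff_indep_def)
qed

lemma lin_form_combination:
  "lin_form A c (\<lambda>a. \<Sum>t\<in>T. \<mu> t * t a) = (\<Sum>t\<in>T. \<mu> t * lin_form A c t)"
  by (simp add: sum_distrib_left sum.swap[of _ A T] mult.left_commute)

lemma aff_indep_insert:
  assumes "aff_indep T" "\<forall>t\<in>T. lin_form A c t = c0" "lin_form A c p \<noteq> c0"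
  shows "aff_indep (insert p T)"
  unfolding aff_indep_def
proof (intro conjI allI impI ballI)
  have "finite T" "p \<notin> T" using assms by (auto simp: aff_indep_def)
  then show "finite (insert p T)" by simp
  fix \<mu> u
  assume dep: "(\<Sum>t\<in>insert p T. \<mu> t) = 0 \<and> (\<forall>a. (\<Sum>t\<in>insert p T. \<mu> t * t a) = 0)"
    and "u \<in> insert p T"
  \<comment> \<open>Evaluating the affine dependence at the hyperplane leaves only the term of p.\<close>
  have "0 = lin_form A c (\<lambda>a. \<Sum>t\<in>insert p T. \<mu> t * t a) - (\<Sum>t\<in>insert p T. \<mu> t) * c0"
    using dep by simp
  also have "\<dots> = (\<Sum>t\<in>insert p T. \<mu> t * (lin_form A c t - c0))"
    by (simp only: lin_form_combination sum_distrib_right sum_subtractf right_diff_distrib)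
  also have "\<dots> = \<mu> p * (lin_form A c p - c0)"
    using \<open>finite T\<close> \<open>p \<notin> T\<close> assms(2) by simp
  finally have "\<mu> p = 0" using assms(3) by simp
  with dep \<open>finite T\<close> \<open>p \<notin> T\<close> have "\<forall>t\<in>T. \<mu> t = 0"
    using assms(1) by (auto simp: aff_indep_def)
  with \<open>\<mu> p = 0\<close> \<open>u \<in> insert p T\<close> show "\<mu> u = 0" by auto
qed

lemma exists_equation_through_orthogonal:
  assumes "finite A" "finite B" "card B < card A"
  shows "\<exists>c c0. ((\<exists>a\<in>A. c a \<noteq> 0) \<or> c0 \<noteq> 0) \<and> (\<forall>b\<in>B. lin_form A c b = c0)
           \<and> lin_form A c \<pi> = 0"
proof -
  \<comment> \<open>Unknowns c a (index Some a) and c0 (index None); one equation per point of B and one for \<pi>.\<close>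
  define I where "I = insert None (Some ` A)"
  define E where "E = insert None (Some ` B)"
  define v where "v i e = (case (i, e) of
      (None, None) \<Rightarrow> 0 | (None, Some b) \<Rightarrow> -1
    | (Some a, None) \<Rightarrow> \<pi> a | (Some a, Some b) \<Rightarrow> b a)"
    for i :: "'a option" and e :: "('a \<Rightarrow> real) option"
  have "finite E" "finite I" "card E < card I"
    using assms by (auto simp: I_def E_def card_image)
  from homogeneous_system_nontrivial_solution[OF this, of v]
  obtain \<mu> where nz: "\<exists>i\<in>I. \<mu> i \<noteq> 0" and sol: "\<forall>e\<in>E. (\<Sum>i\<in>I. \<mu> i * v i e) = 0"
    by blast
  have split_I: "(\<Sum>i\<in>I. \<mu> i * v i e)
      = \<mu> None * v None e + (\<Sum>a\<in>A. \<mu> (Some a) * v (Some a) e)" for e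
    using assms(1) by (simp add: I_def sum.reindex)
  show ?thesis
  proof (intro exI conjI)
    show "(\<exists>a\<in>A. \<mu> (Some a) \<noteq> 0) \<or> \<mu> None \<noteq> 0" using nz by (auto simp: I_def)
    show "\<forall>b\<in>B. lin_form A (\<lambda>a. \<mu> (Some a)) b = \<mu> None"
      using sol split_I by (auto simp: E_def v_def)
    show "lin_form A (\<lambda>a. \<mu> (Some a)) \<pi> = 0"
      using sol split_I[of None] by (simp add: E_def v_def)
  qed
qed

lemma exists_aff_indep_spanning_subset:
  assumes "finite S"
  shows "\<exists>B\<subseteq>S. aff_indep B
    \<and> (\<forall>c c0. (\<forall>b\<in>B. lin_form A c b = c0) \<longrightarrow> (\<forall>s\<in>S. lin_form A c s = c0))"
proof -
  have "\<exists>B. (B \<subseteq> S \<and> aff_indep B) \<and> (\<forall>T. T \<subseteq> S \<and> aff_indep T \<longrightarrow> card T \<le> card B)"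
  proof (rule ex_has_greatest_nat[where k = "{}" and b = "Suc (card S)"])
    show "{} \<subseteq> S \<and> aff_indep {}" by (simp add: aff_indep_def)
    show "\<forall>T. T \<subseteq> S \<and> aff_indep T \<longrightarrow> card T < Suc (card S)"
      using card_mono[OF assms] by (simp add: less_Suc_eq_le)
  qed
  then obtain B where B: "B \<subseteq> S" "aff_indep B"
    and maximal: "\<And>T. T \<subseteq> S \<Longrightarrow> aff_indep T \<Longrightarrow> card T \<le> card B"
    by blast
  have "finite B" using B(2) by (simp add: aff_indep_def)
  have "lin_form A c s = c0" if on_B: "\<forall>b\<in>B. lin_form A c b = c0" and "s \<in> S" for c c0 s
  proof (rule ccontr)
    assume off: "lin_form A c s \<noteq> c0"
    then have "s \<notin> B" using on_B by auto
    with \<open>finite B\<close> have "card (insert s B) > card B" by simp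
    moreover have "aff_indep (insert s B)" using aff_indep_insert[OF B(2) on_B off] .
    ultimately show False using maximal[of "insert s B"] B(1) \<open>s \<in> S\<close> by simp
  qed
  with B show ?thesis by blast
qed

lemma exists_aff_indep_of_proportional_equations:
  assumes "finite S" "finite A" "S \<noteq> {}" "\<exists>a\<in>A. \<pi> a \<noteq> 0"
    and proportional: "\<And>c c0. \<forall>s\<in>S. lin_form A c s = c0 \<Longrightarrow> \<exists>l. \<forall>a\<in>A. c a = l * \<pi> a"
  shows "\<exists>T\<subseteq>S. aff_indep T \<and> card T = card A"
proof -
  obtain B where B: "B \<subseteq> S" "aff_indep B"
    and spanning: "\<And>c c0. \<forall>b\<in>B. lin_form A c b = c0 \<Longrightarrow> \<forall>s\<in>S. lin_form A c s = c0"
    using exists_aff_indep_spanning_subset[OF assms(1), of A] by blast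
  have "card A \<le> card B"
  proof (rule ccontr)
    assume "\<not> card A \<le> card B"
    then have "card B < card A" by simp
    moreover have "finite B" using B(2) by (simp add: aff_indep_def)
    ultimately obtain c c0 where nz: "(\<exists>a\<in>A. c a \<noteq> 0) \<or> c0 \<noteq> 0"
      and on_B: "\<forall>b\<in>B. lin_form A c b = c0" and orth: "lin_form A c \<pi> = 0"
      using exists_equation_through_orthogonal[OF assms(2)] by blast
    have on_S: "\<forall>s\<in>S. lin_form A c s = c0" using spanning[OF on_B] .
    then obtain l where l: "\<forall>a\<in>A. c a = l * \<pi> a" using proportional by blast
    obtain a0 where "a0 \<in> A" "\<pi> a0 \<noteq> 0" using assms(4) by blast
    then have "(\<Sum>a\<in>A. \<pi> a * \<pi> a) > 0"
      using assms(2) by (intro sum_pos2) (auto simp: zero_less_mult_iff)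
    moreover have "l * (\<Sum>a\<in>A. \<pi> a * \<pi> a) = 0"
      using orth l by (simp add: sum_distrib_left mult.assoc)
    ultimately have "\<forall>a\<in>A. c a = 0" using l by simp
    moreover obtain s where "s \<in> S" using assms(3) by blast
    ultimately show False using nz on_S by auto
  qed
  then obtain T where "T \<subseteq> B" "card T = card A" by (meson obtain_subset_with_card_n)
  with B show ?thesis using aff_indep_subset by blast
qed

lemma lin_form_diff_two_points:
  assumes "finite A" "d1 \<in> A" "d2 \<in> A" "d1 \<noteq> d2" "\<forall>a\<in>A - {d1, d2}. x1 a = x2 a"
  shows "lin_form A c x1 - lin_form A c x2 = c d1 * (x1 d1 - x2 d1) + c d2 * (x1 d2 - x2 d2)"
proof -
  have "lin_form A c x1 - lin_form A c x2 = (\<Sum>a\<in>A. c a * (x1 a - x2 a))"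
    by (simp add: sum_subtractf right_diff_distrib)
  also have "\<dots> = (\<Sum>a\<in>{d1, d2}. c a * (x1 a - x2 a))"
    using assms by (intro sum.mono_neutral_right) auto
  finally show ?thesis using assms(4) by simp
qed

lemma pdim_eqI:
  assumes "T \<subseteq> P" "aff_indep T" "card T = Suc k"
    and "\<And>U. U \<subseteq> P \<Longrightarrow> aff_indep U \<Longrightarrow> card U \<le> Suc k"
  shows "pdim P = k"
proof -
  have "(GREATEST m. \<exists>U. U \<subseteq> P \<and> aff_indep U \<and> card U = m) = Suc k"
    using assms by (intro Greatest_equality) auto
  then show ?thesis by (simp add: pdim_def)
qed

lemma subset_conv_hull: "V \<subseteq> conv_hull V"
proof
  fix v assume "v \<in> V"
  then show "v \<in> conv_hull V"
    unfolding conv_hull_def by (intro CollectI exI[of _ "{v}"] exI[of _ "\<lambda>_. 1"]) auto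
qed

lemma conv_hull_vanish:
  assumes "x \<in> conv_hull V" "\<forall>v\<in>V. v a = 0"
  shows "x a = 0"
proof -
  obtain T w where "T \<subseteq> V" "x = (\<lambda>a. \<Sum>t\<in>T. w t * t a)"
    using assms(1) unfolding conv_hull_def by blast
  with assms(2) show ?thesis by (auto intro!: sum.neutral)
qed

lemma lin_form_conv_hull_le:
  assumes "x \<in> conv_hull V" "\<forall>v\<in>V. lin_form A c v \<le> b"
  shows "lin_form A c x \<le> b"
proof -
  obtain T w where T: "T \<subseteq> V" "\<forall>t\<in>T. w t \<ge> 0" "(\<Sum>t\<in>T. w t) = 1"
    and x: "x = (\<lambda>a. \<Sum>t\<in>T. w t * t a)"
    using assms(1) unfolding conv_hull_def by blast
  have "lin_form A c x = (\<Sum>t\<in>T. w t * lin_form A c t)"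
    unfolding x by (rule lin_form_combination)
  also have "\<dots> \<le> (\<Sum>t\<in>T. w t * b)"
    using T(1,2) assms(2) by (intro sum_mono mult_left_mono) auto
  also have "\<dots> = b" using T(3) by (simp add: sum_distrib_right[symmetric])
  finally show ?thesis .
qed

lemma pdim_conv_hull_eq:
  assumes "finite A" and support: "\<forall>v\<in>V. \<forall>a. a \<notin> A \<longrightarrow> v a = 0"
    and "T \<subseteq> conv_hull V" "aff_indep T" "card T = Suc (card A)"
  shows "pdim (conv_hull V) = card A"
proof (rule pdim_eqI[OF assms(3-5)])
  fix U assume "U \<subseteq> conv_hull V" "aff_indep U"
  moreover from this have "\<forall>u\<in>U. \<forall>a. a \<notin> A \<longrightarrow> u a = 0"
    using support by (auto intro: conv_hull_vanish)
  ultimately show "card U \<le> Suc (card A)" using aff_indep_card_le[OF assms(1)] by simp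
qed

lemma finite_arcs: "finite (arcs n)"
  by (rule finite_subset[of _ "{1..n} \<times> {1..n}"]) (auto simp: arcs_def)

lemma defines_facet_conv_hullI:
  fixes V :: "(nat \<times> nat \<Rightarrow> real) set"
  assumes "finite V"
    and support: "\<forall>v\<in>V. \<forall>a. a \<notin> arcs n \<longrightarrow> v a = 0"
    and valid: "\<forall>v\<in>V. lin_form (arcs n) \<pi> v \<le> \<pi>0"
    and "s \<in> V" "lin_form (arcs n) \<pi> s = \<pi>0"
    and "p \<in> V" "lin_form (arcs n) \<pi> p \<noteq> \<pi>0"
    and proportional: "\<And>c c0. \<forall>v\<in>V. lin_form (arcs n) \<pi> v = \<pi>0 \<longrightarrow> lin_form (arcs n) c v = c0
      \<Longrightarrow> \<exists>l. \<forall>a\<in>arcs n. c a = l * \<pi> a"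
  shows "defines_facet n \<pi> \<pi>0 (conv_hull V)"
proof -
  define S where "S = {v \<in> V. lin_form (arcs n) \<pi> v = \<pi>0}"
  define F where "F = {x \<in> conv_hull V. lin_form (arcs n) \<pi> x = \<pi>0}"
  have S: "finite S" "S \<noteq> {}" using assms(1,4,5) by (auto simp: S_def)
  have nonzero: "\<exists>a\<in>arcs n. \<pi> a \<noteq> 0"
  proof (rule ccontr)
    assume "\<not> ?thesis"
    then have "lin_form (arcs n) \<pi> v = 0" for v by simp
    with assms(5,7) show False by simp
  qed
  have on_S: "\<exists>l. \<forall>a\<in>arcs n. c a = l * \<pi> a" if "\<forall>s\<in>S. lin_form (arcs n) c s = c0" for c c0
    using that by (intro proportional[of c c0]) (simp add: S_def)
  have "\<exists>T\<subseteq>S. aff_indep T \<and> card T = card (arcs n)"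
    by (rule exists_aff_indep_of_proportional_equations[OF S(1) finite_arcs S(2) nonzero on_S])
  then obtain T where T: "T \<subseteq> S" "aff_indep T" "card T = card (arcs n)"
    by blast
  have "p \<notin> T" using T(1) assms(7) by (auto simp: S_def)
  have "finite T" using T(2) unfolding aff_indep_def by blast
  have "aff_indep (insert p T)" using aff_indep_insert[OF T(2) _ assms(7)] T(1) by (auto simp: S_def)
  moreover have "insert p T \<subseteq> conv_hull V" using T(1) assms(6) subset_conv_hull by (auto simp: S_def)
  moreover have "card (insert p T) = Suc (card (arcs n))" using T(3) \<open>p \<notin> T\<close> \<open>finite T\<close> by simp
  ultimately have dim: "pdim (conv_hull V) = card (arcs n)"
    using pdim_conv_hull_eq[OF finite_arcs support] by blast
  have "T \<subseteq> F" "s \<in> F" "p \<notin> F"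
    using T(1) assms(4,5,6,7) subset_conv_hull by (auto simp: S_def F_def)
  show ?thesis
    unfolding defines_facet_def Let_def F_def[symmetric]
  proof (intro conjI)
    show "\<forall>x\<in>conv_hull V. lin_form (arcs n) \<pi> x \<le> \<pi>0"
      using valid lin_form_conv_hull_le by blast
    show "F \<noteq> {}" using \<open>s \<in> F\<close> by blast
    show "F \<noteq> conv_hull V" using \<open>p \<notin> F\<close> assms(6) subset_conv_hull by blast
    show "\<exists>T. T \<subseteq> F \<and> aff_indep T \<and> card T = pdim (conv_hull V)"
      using T(2,3) \<open>T \<subseteq> F\<close> dim by auto
  qed
qed

section \<open>The weak order polytope\<close>

definition incidence_coeff :: "nat \<Rightarrow> nat \<times> nat \<Rightarrow> real" where
  "incidence_coeff i1 = (\<lambda>(i, j). if i = i1 \<or> j = i1 then 1 else -1)"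

definition offdiag :: "'a set \<Rightarrow> ('a \<times> 'a) set" where
  "offdiag C = {(x, y). x \<in> C \<and> y \<in> C \<and> x \<noteq> y}"

lemma arcs_eq_offdiag: "arcs n = offdiag {1..n}"
  by (simp add: arcs_def offdiag_def)

lemma incidence_coeff_swap: "incidence_coeff i1 (prod.swap a) = incidence_coeff i1 a"
  by (cases a) (auto simp: incidence_coeff_def)

lemma sum_incidence_coeff_offdiag:
  assumes "finite C" "i1 \<in> C"
  shows "(\<Sum>a\<in>offdiag C. incidence_coeff i1 a) = real (card C - 1) * (4 - real (card C))"
proof -
  define m where "m = card C"
  have "m \<ge> 1" using assms card_0_eq by (fastforce simp: m_def)
  have row_i1: "(\<Sum>y\<in>C - {i1}. incidence_coeff i1 (i1, y)) = real (m - 1)"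
    using assms by (simp add: incidence_coeff_def m_def)
  have row: "(\<Sum>y\<in>C - {x}. incidence_coeff i1 (x, y)) = 3 - real m" if x: "x \<in> C - {i1}" for x
  proof -
    have "C - {x} = insert i1 (C - {x, i1})" using x assms by auto
    then have "(\<Sum>y\<in>C - {x}. incidence_coeff i1 (x, y))
        = 1 + (\<Sum>y\<in>C - {x, i1}. incidence_coeff i1 (x, y))"
      using assms(1) by (simp add: incidence_coeff_def)
    also have "(\<Sum>y\<in>C - {x, i1}. incidence_coeff i1 (x, y)) = (\<Sum>y\<in>C - {x, i1}. -1)"
      using x by (intro sum.cong) (auto simp: incidence_coeff_def)
    also have "card (C - {x, i1}) = m - 2"
      using x assms by (simp add: m_def card_Diff_subset)
    moreover have "card {x, i1} \<le> m"
      using x assms unfolding m_def by (intro card_mono) auto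
    ultimately show ?thesis using x by (simp add: of_nat_diff)
  qed
  have "offdiag C = Sigma C (\<lambda>x. C - {x})" by (auto simp: offdiag_def)
  then have "(\<Sum>a\<in>offdiag C. incidence_coeff i1 a)
      = (\<Sum>x\<in>C. \<Sum>y\<in>C - {x}. incidence_coeff i1 (x, y))"
    using assms(1) by (simp add: sum.Sigma)
  also have "\<dots> = real (m - 1) + (\<Sum>x\<in>C - {i1}. 3 - real m)"
    using assms row_i1 row by (simp add: sum.remove)
  also have "\<dots> = real (m - 1) * (4 - real m)"
    using assms \<open>m \<ge> 1\<close> by (simp add: m_def of_nat_diff algebra_simps)
  finally show ?thesis by (simp add: m_def)
qed

lemma sum_incidence_coeff_offdiag_le:
  assumes "finite C" "i1 \<in> C"
  shows "(\<Sum>a\<in>offdiag C. incidence_coeff i1 a) \<le> 2"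
proof (cases "card C \<le> 3")
  case True
  moreover have "card C \<ge> 1" using assms card_0_eq by fastforce
  ultimately have "card C = 1 \<or> card C = 2 \<or> card C = 3" by linarith
  then show ?thesis using sum_incidence_coeff_offdiag[OF assms] by auto
next
  case False
  then have "(real (card C) - 1) * (4 - real (card C)) \<le> 0"
    by (intro mult_nonneg_nonpos) auto
  with False show ?thesis using sum_incidence_coeff_offdiag[OF assms] by (simp add: of_nat_diff)
qed

definition tied_arcs :: "nat \<Rightarrow> (nat \<times> nat) set \<Rightarrow> (nat \<times> nat) set" where
  "tied_arcs n W = {a \<in> arcs n. a \<in> W \<and> prod.swap a \<in> W}"

lemma sum_arcs_swap: "(\<Sum>a\<in>arcs n. f (prod.swap a)) = (\<Sum>a\<in>arcs n. f a)"
  by (rule sum.reindex_bij_witness[of _ prod.swap prod.swap]) (auto simp: arcs_def)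

text \<open>Every arc is counted once for the preference it expresses, and ties are counted twice.\<close>
lemma lin_form_char_vec_symmetric:
  assumes "weak_order n W" and symmetric: "\<And>a. \<pi> (prod.swap a) = \<pi> a"
  shows "2 * lin_form (arcs n) \<pi> (char_vec n W)
    = (\<Sum>a\<in>arcs n. \<pi> a) + (\<Sum>a\<in>tied_arcs n W. \<pi> a)"
proof -
  let ?x = "char_vec n W"
  have total: "?x a + ?x (prod.swap a) = 1 + (if a \<in> tied_arcs n W then 1 else 0)"
    if a: "a \<in> arcs n" for a
  proof -
    obtain i j where "a = (i, j)" "i \<in> {1..n}" "j \<in> {1..n}" "i \<noteq> j"
      using a unfolding arcs_def by blast
    moreover from this assms(1) have "(i, j) \<in> W \<or> (j, i) \<in> W"
      by (auto simp: weak_order_def total_on_def)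
    ultimately show ?thesis by (auto simp: char_vec_def tied_arcs_def arcs_def)
  qed
  have "2 * lin_form (arcs n) \<pi> ?x
      = lin_form (arcs n) \<pi> ?x + (\<Sum>a\<in>arcs n. \<pi> a * ?x (prod.swap a))"
    using sum_arcs_swap[of "\<lambda>a. \<pi> a * ?x a"] symmetric by simp
  also have "\<dots> = (\<Sum>a\<in>arcs n. \<pi> a * (?x a + ?x (prod.swap a)))"
    by (simp add: sum.distrib distrib_left)
  also have "\<dots> = (\<Sum>a\<in>arcs n. \<pi> a + (if a \<in> tied_arcs n W then \<pi> a else 0))"
    using total by (intro sum.cong) (auto simp: distrib_left)
  also have "\<dots> = (\<Sum>a\<in>arcs n. \<pi> a) + (\<Sum>a\<in>tied_arcs n W. \<pi> a)"
    by (simp add: sum.distrib sum.If_cases finite_arcs tied_arcs_def Int_def)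
  finally show ?thesis .
qed

lemma sum_incidence_coeff_tied_arcs_le:
  assumes "weak_order n W" "i1 \<in> {1..n}"
  shows "(\<Sum>a\<in>tied_arcs n W. incidence_coeff i1 a) \<le> 2"
proof -
  define C where "C = {x \<in> {1..n}. (i1, x) \<in> W \<and> (x, i1) \<in> W}"
  have "finite C" by (simp add: C_def)
  have "refl_on {1..n} W" "trans W" using assms(1) by (simp_all add: weak_order_def)
  then have "i1 \<in> C" using assms(2) by (simp add: C_def refl_on_def)
  have "finite (tied_arcs n W)" by (simp add: tied_arcs_def finite_arcs)
  have "offdiag C \<subseteq> tied_arcs n W"
  proof
    fix a assume "a \<in> offdiag C"
    then obtain x y where "a = (x, y)" "x \<in> C" "y \<in> C" "x \<noteq> y" unfolding offdiag_def by blast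
    moreover from this have "(x, y) \<in> W" "(y, x) \<in> W"
      using \<open>trans W\<close> unfolding C_def by (blast dest: transD)+
    ultimately show "a \<in> tied_arcs n W" by (auto simp: tied_arcs_def arcs_def C_def)
  qed
  moreover have "incidence_coeff i1 a = -1" if a: "a \<in> tied_arcs n W - offdiag C" for a
  proof -
    obtain x y where "a = (x, y)" "(x, y) \<in> W" "(y, x) \<in> W" "(x, y) \<notin> offdiag C"
      "x \<in> {1..n}" "y \<in> {1..n}" "x \<noteq> y"
      using a unfolding tied_arcs_def arcs_def by auto
    with \<open>i1 \<in> C\<close> have "x \<noteq> i1" "y \<noteq> i1" by (auto simp: C_def offdiag_def)
    with \<open>a = (x, y)\<close> show ?thesis by (simp add: incidence_coeff_def)
  qed
  ultimately have "(\<Sum>a\<in>tied_arcs n W. incidence_coeff i1 a)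
      = (\<Sum>a\<in>tied_arcs n W - offdiag C. -1) + (\<Sum>a\<in>offdiag C. incidence_coeff i1 a)"
    using \<open>finite (tied_arcs n W)\<close> by (simp add: sum.subset_diff[of "offdiag C"])
  also have "\<dots> \<le> (\<Sum>a\<in>offdiag C. incidence_coeff i1 a)" by simp
  also have "\<dots> \<le> 2"
    using \<open>finite C\<close> \<open>i1 \<in> C\<close> by (rule sum_incidence_coeff_offdiag_le)
  finally show ?thesis .
qed

lemma lin_form_incidence_coeff_vertex:
  assumes "3 \<le> n" "weak_order n W" "i1 \<in> {1..n}"
  shows "lin_form (arcs n) (incidence_coeff i1) (char_vec n W)
    = (2 - real ((n - 2) * (n - 3)) / 2) + ((\<Sum>a\<in>tied_arcs n W. incidence_coeff i1 a) - 2) / 2"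
proof -
  have "2 * lin_form (arcs n) (incidence_coeff i1) (char_vec n W)
      = real (n - 1) * (4 - real n) + (\<Sum>a\<in>tied_arcs n W. incidence_coeff i1 a)"
    using lin_form_char_vec_symmetric[where \<pi> = "incidence_coeff i1", OF assms(2) incidence_coeff_swap]
      sum_incidence_coeff_offdiag[of "{1..n}" i1] assms(3)
    by (simp add: arcs_eq_offdiag)
  moreover have "real ((n - 2) * (n - 3)) = (real n - 2) * (real n - 3)"
    unfolding of_nat_mult using assms(1) by (simp add: of_nat_diff)
  ultimately show ?thesis using assms(1) by (simp add: of_nat_diff field_simps)
qed

definition rank_order :: "nat \<Rightarrow> (nat \<Rightarrow> nat) \<Rightarrow> (nat \<times> nat) set" where
  "rank_order n r = {(x, y). x \<in> {1..n} \<and> y \<in> {1..n} \<and> r x \<le> r y}"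

lemma weak_order_rank_order: "weak_order n (rank_order n r)"
  by (auto simp: weak_order_def rank_order_def refl_on_def trans_def total_on_def)

lemma char_vec_rank_order:
  "char_vec n (rank_order n r) a = (if a \<in> arcs n \<and> r (fst a) \<le> r (snd a) then 1 else 0)"
  by (cases a) (auto simp: char_vec_def rank_order_def arcs_def)

definition unique_tie_class :: "nat \<Rightarrow> (nat \<Rightarrow> nat) \<Rightarrow> nat set \<Rightarrow> bool" where
  "unique_tie_class n r C \<longleftrightarrow> C \<subseteq> {1..n}
     \<and> (\<forall>x\<in>{1..n}. \<forall>y\<in>{1..n}. x \<noteq> y \<longrightarrow> (r x = r y \<longleftrightarrow> x \<in> C \<and> y \<in> C))"

lemma unique_tie_class_if:
  assumes "C \<subseteq> {1..n}" "inj f" "\<And>x. f x \<noteq> t"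
  shows "unique_tie_class n (\<lambda>x. if x \<in> C then t else f x) C"
  using assms by (auto simp: unique_tie_class_def inj_def)

lemma tied_arcs_rank_order:
  assumes "unique_tie_class n r C"
  shows "tied_arcs n (rank_order n r) = offdiag C"
proof -
  have "a \<in> tied_arcs n (rank_order n r) \<longleftrightarrow> a \<in> offdiag C" for a
  proof (cases a)
    case (Pair x y)
    then have "a \<in> tied_arcs n (rank_order n r) \<longleftrightarrow> x \<in> {1..n} \<and> y \<in> {1..n} \<and> x \<noteq> y \<and> r x = r y"
      by (auto simp: tied_arcs_def rank_order_def arcs_def)
    also have "\<dots> \<longleftrightarrow> a \<in> offdiag C"
      using Pair assms unfolding unique_tie_class_def offdiag_def by blast
    finally show ?thesis .
  qed
  then show ?thesis by blast
qed

lemma sum_incidence_coeff_tied_arcs_rank_order: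
  assumes "unique_tie_class n r C" "i1 \<in> C" "card C \<in> {2, 3}"
  shows "(\<Sum>a\<in>tied_arcs n (rank_order n r). incidence_coeff i1 a) = 2"
proof -
  have "C \<subseteq> {1..n}" using assms(1) by (simp add: unique_tie_class_def)
  then have "finite C" using finite_subset by blast
  then show ?thesis
    using tied_arcs_rank_order[OF assms(1)] sum_incidence_coeff_offdiag[OF _ assms(2)] assms(3)
    by auto
qed

text \<open>The vertices of the face are the weak orders whose tied arcs have coefficient sum 2;
  c x = c0 is an arbitrary equation valid on them.\<close>
context
  fixes n i1 :: nat and c :: "nat \<times> nat \<Rightarrow> real" and c0 :: real
  assumes i1: "i1 \<in> {1..n}"
    and face_equation: "\<And>W. weak_order n W \<Longrightarrow> (\<Sum>a\<in>tied_arcs n W. incidence_coeff i1 a) = 2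
      \<Longrightarrow> lin_form (arcs n) c (char_vec n W) = c0"
begin

lemma face_equation_rank_orders_diff:
  assumes "unique_tie_class n r1 C1" "i1 \<in> C1" "card C1 \<in> {2, 3}"
    and "unique_tie_class n r2 C2" "i1 \<in> C2" "card C2 \<in> {2, 3}"
    and "d1 \<in> arcs n" "d2 \<in> arcs n" "d1 \<noteq> d2"
    and "\<And>x y. (x, y) \<in> arcs n - {d1, d2} \<Longrightarrow> r1 x \<le> r1 y \<longleftrightarrow> r2 x \<le> r2 y"
  shows "c d1 * (char_vec n (rank_order n r1) d1 - char_vec n (rank_order n r2) d1)
       + c d2 * (char_vec n (rank_order n r1) d2 - char_vec n (rank_order n r2) d2) = 0"
proof -
  have "lin_form (arcs n) c (char_vec n (rank_order n r1)) = c0"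
    using sum_incidence_coeff_tied_arcs_rank_order[OF assms(1-3)]
    by (rule face_equation[OF weak_order_rank_order])
  moreover have "lin_form (arcs n) c (char_vec n (rank_order n r2)) = c0"
    using sum_incidence_coeff_tied_arcs_rank_order[OF assms(4-6)]
    by (rule face_equation[OF weak_order_rank_order])
  moreover have "\<forall>a\<in>arcs n - {d1, d2}. char_vec n (rank_order n r1) a = char_vec n (rank_order n r2) a"
    using assms(10) by (auto simp: char_vec_rank_order)
  note lin_form_diff_two_points[OF finite_arcs assms(7-9) this, of c]
  ultimately show ?thesis by simp
qed

lemma face_coeff_swap:
  assumes "j \<in> {1..n}" "p \<in> {1..n}" "q \<in> {1..n}" "distinct [i1, j, p, q]"
  shows "c (p, q) = c (q, p)"
proof -
  \<comment> \<open>i1 and j tied at the bottom, then p and q in either order, then the rest.\<close>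
  define f1 where "f1 x = (if x = p then 1 else if x = q then 2 else x + 3)" for x :: nat
  define f2 where "f2 x = (if x = q then 1 else if x = p then 2 else x + 3)" for x :: nat
  define r1 where "r1 x = (if x \<in> {i1, j} then 0 else f1 x)" for x
  define r2 where "r2 x = (if x \<in> {i1, j} then 0 else f2 x)" for x
  have "unique_tie_class n r1 {i1, j}" "unique_tie_class n r2 {i1, j}"
    unfolding r1_def r2_def using assms i1
    by (intro unique_tie_class_if; auto simp: f1_def f2_def inj_def)+
  moreover have "(p, q) \<in> arcs n" "(q, p) \<in> arcs n" using assms by (auto simp: arcs_def)
  moreover have "r1 x \<le> r1 y \<longleftrightarrow> r2 x \<le> r2 y" if "(x, y) \<notin> {(p, q), (q, p)}" for x y
    using that assms by (auto simp: r1_def r2_def f1_def f2_def)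
  ultimately have "c (p, q) * (char_vec n (rank_order n r1) (p, q) - char_vec n (rank_order n r2) (p, q))
      + c (q, p) * (char_vec n (rank_order n r1) (q, p) - char_vec n (rank_order n r2) (q, p)) = 0"
    using assms by (intro face_equation_rank_orders_diff[of _ "{i1, j}" _ "{i1, j}"]) auto
  with assms \<open>(p, q) \<in> arcs n\<close> \<open>(q, p) \<in> arcs n\<close> show ?thesis
    by (simp add: char_vec_rank_order r1_def r2_def f1_def f2_def)
qed

lemma face_coeff_into_pair:
  assumes "j \<in> {1..n}" "k \<in> {1..n}" "distinct [i1, j, k]"
  shows "c (k, i1) + c (k, j) = 0"
proof -
  \<comment> \<open>k just above the tied pair i1, j versus k tied with both of them.\<close>
  define r1 where "r1 x = (if x \<in> {i1, j} then 0 else if x = k then 1 else x + 2)" for x :: nat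
  define r2 where "r2 x = (if x \<in> {i1, j, k} then 0 else x + 1)" for x :: nat
  have "unique_tie_class n r1 {i1, j}" "unique_tie_class n r2 {i1, j, k}"
    unfolding r1_def r2_def using assms i1
    by (intro unique_tie_class_if; auto simp: inj_def)+
  moreover have "(k, i1) \<in> arcs n" "(k, j) \<in> arcs n" using assms i1 by (auto simp: arcs_def)
  moreover have "r1 x \<le> r1 y \<longleftrightarrow> r2 x \<le> r2 y" if "(x, y) \<notin> {(k, i1), (k, j)}" for x y
    using that assms by (auto simp: r1_def r2_def)
  ultimately have "c (k, i1) * (char_vec n (rank_order n r1) (k, i1) - char_vec n (rank_order n r2) (k, i1))
      + c (k, j) * (char_vec n (rank_order n r1) (k, j) - char_vec n (rank_order n r2) (k, j)) = 0"
    using assms by (intro face_equation_rank_orders_diff[of _ "{i1, j}" _ "{i1, j, k}"]) auto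
  with assms \<open>(k, i1) \<in> arcs n\<close> \<open>(k, j) \<in> arcs n\<close> show ?thesis
    by (simp add: char_vec_rank_order r1_def r2_def)
qed

lemma face_coeff_out_of_pair:
  assumes "j \<in> {1..n}" "k \<in> {1..n}" "distinct [i1, j, k]"
  shows "c (i1, k) + c (j, k) = 0"
proof -
  \<comment> \<open>k just below the tied pair i1, j versus k tied with both of them.\<close>
  define r1 where "r1 x = (if x \<in> {i1, j} then 1 else if x = k then 0 else x + 2)" for x :: nat
  define r2 where "r2 x = (if x \<in> {i1, j, k} then 0 else x + 1)" for x :: nat
  have "unique_tie_class n r1 {i1, j}" "unique_tie_class n r2 {i1, j, k}"
    unfolding r1_def r2_def using assms i1
    by (intro unique_tie_class_if; auto simp: inj_def)+
  moreover have "(i1, k) \<in> arcs n" "(j, k) \<in> arcs n" using assms i1 by (auto simp: arcs_def)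
  moreover have "r1 x \<le> r1 y \<longleftrightarrow> r2 x \<le> r2 y" if "(x, y) \<notin> {(i1, k), (j, k)}" for x y
    using that assms by (auto simp: r1_def r2_def)
  ultimately have "c (i1, k) * (char_vec n (rank_order n r1) (i1, k) - char_vec n (rank_order n r2) (i1, k))
      + c (j, k) * (char_vec n (rank_order n r1) (j, k) - char_vec n (rank_order n r2) (j, k)) = 0"
    using assms by (intro face_equation_rank_orders_diff[of _ "{i1, j}" _ "{i1, j, k}"]) auto
  with assms \<open>(i1, k) \<in> arcs n\<close> \<open>(j, k) \<in> arcs n\<close> show ?thesis
    by (simp add: char_vec_rank_order r1_def r2_def)
qed

lemma face_equation_proportional:
  assumes "4 \<le> n"
  shows "\<exists>l. \<forall>a\<in>arcs n. c a = l * incidence_coeff i1 a"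
proof -
  have fresh: "\<exists>z\<in>{1..n}. z \<notin> {i1, x, y}" for x y
  proof (rule ccontr)
    assume "\<not> ?thesis"
    then have "card {1..n} \<le> card {i1, x, y}" by (intro card_mono) auto
    moreover have "card {i1, x, y} \<le> 3" by (simp add: card_insert_if)
    ultimately show False using assms by simp
  qed
  obtain j0 where j0: "j0 \<in> {1..n}" "j0 \<noteq> i1" using fresh by blast
  define l where "l = c (i1, j0)"
  have from_i1: "c (i1, k) = l" if k: "k \<in> {1..n}" "k \<noteq> i1" for k
  proof (cases "k = j0")
    case False
    obtain z where "z \<in> {1..n}" "z \<notin> {i1, j0, k}" using fresh by blast
    with j0 k False have "c (j0, k) = c (k, j0)" by (intro face_coeff_swap[of z]) auto
    moreover have "c (i1, k) + c (j0, k) = 0" using j0 k False by (intro face_coeff_out_of_pair) auto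
    moreover have "c (i1, j0) + c (k, j0) = 0" using j0 k False by (intro face_coeff_out_of_pair) auto
    ultimately show ?thesis by (simp add: l_def)
  qed (simp add: l_def)
  have into_i1: "c (k, i1) = l" if k: "k \<in> {1..n}" "k \<noteq> i1" for k
  proof -
    obtain j where j: "j \<in> {1..n}" "j \<notin> {i1, k}" using fresh by blast
    obtain z where "z \<in> {1..n}" "z \<notin> {i1, j, k}" using fresh by blast
    with j k have "c (k, j) = c (j, k)" by (intro face_coeff_swap[of z]) auto
    moreover have "c (k, i1) + c (k, j) = 0" using j k by (intro face_coeff_into_pair) auto
    moreover have "c (i1, k) + c (j, k) = 0" using j k by (intro face_coeff_out_of_pair) auto
    ultimately show ?thesis using from_i1[OF k] by simp
  qed
  have off_i1: "c (x, y) = - l" if "x \<in> {1..n}" "y \<in> {1..n}" "distinct [i1, x, y]" for x y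
    using face_coeff_out_of_pair[of x y] from_i1[of y] that by simp
  have "c (x, y) = l * incidence_coeff i1 (x, y)" if "(x, y) \<in> arcs n" for x y
    using that from_i1 into_i1 off_i1 by (auto simp: arcs_def incidence_coeff_def)
  then show ?thesis by auto
qed

end

lemma finite_weak_order_vertices: "finite {char_vec n W | W. weak_order n W}"
proof (rule finite_subset)
  show "{char_vec n W | W. weak_order n W} \<subseteq> char_vec n ` Pow ({1..n} \<times> {1..n})"
    by (auto simp: weak_order_def)
qed simp

lemma tied_arcs_rank_order_id: "tied_arcs n (rank_order n id) = {}"
proof -
  have "unique_tie_class n id {}" by (simp add: unique_tie_class_def)
  then show ?thesis by (simp add: tied_arcs_rank_order offdiag_def)
qed

lemma exists_weak_order_tied_sum_two:
  assumes "2 \<le> n" "i1 \<in> {1..n}"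
  shows "\<exists>W. weak_order n W \<and> (\<Sum>a\<in>tied_arcs n W. incidence_coeff i1 a) = 2"
proof -
  define j :: nat where "j = (if i1 = 1 then 2 else 1)"
  have "j \<in> {1..n}" "j \<noteq> i1" using assms by (auto simp: j_def)
  then have "unique_tie_class n (\<lambda>x. if x \<in> {i1, j} then 0 else x + 1) {i1, j}"
    using assms(2) by (intro unique_tie_class_if) (auto simp: inj_def)
  moreover have "card {i1, j} \<in> {2, 3}" using \<open>j \<noteq> i1\<close> by simp
  ultimately have "(\<Sum>a\<in>tied_arcs n (rank_order n (\<lambda>x. if x \<in> {i1, j} then 0 else x + 1)).
      incidence_coeff i1 a) = 2"
    by (intro sum_incidence_coeff_tied_arcs_rank_order) auto
  then show ?thesis using weak_order_rank_order by blast
qed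

theorem mainTheorem7:
  fixes n i1 :: nat
  assumes "n \<ge> 4" and "i1 \<in> {1..n}"
  shows "defines_facet n
           (\<lambda>(i,j). if i = i1 \<or> j = i1 then 1 else -1)
           (2 - real ((n - 2) * (n - 3)) / 2)
           (weak_order_polytope n)"
proof -
  define \<pi>0 where "\<pi>0 = 2 - real ((n - 2) * (n - 3)) / 2"
  define V where "V = {char_vec n W | W. weak_order n W}"
  have "2 \<le> n" using assms(1) by simp
  then obtain W0 where W0: "weak_order n W0" "(\<Sum>a\<in>tied_arcs n W0. incidence_coeff i1 a) = 2"
    using exists_weak_order_tied_sum_two[OF _ assms(2)] by blast
  have vertex: "lin_form (arcs n) (incidence_coeff i1) (char_vec n W)
      = \<pi>0 + ((\<Sum>a\<in>tied_arcs n W. incidence_coeff i1 a) - 2) / 2" if "weak_order n W" for W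
    using lin_form_incidence_coeff_vertex[OF _ that assms(2)] assms(1) by (simp add: \<pi>0_def)
  have "defines_facet n (incidence_coeff i1) \<pi>0 (conv_hull V)"
  proof (rule defines_facet_conv_hullI[where s = "char_vec n W0" and p = "char_vec n (rank_order n id)"])
    show "finite V" using finite_weak_order_vertices by (simp add: V_def)
    show "\<forall>v\<in>V. \<forall>a. a \<notin> arcs n \<longrightarrow> v a = 0" by (auto simp: V_def char_vec_def)
    show "\<forall>v\<in>V. lin_form (arcs n) (incidence_coeff i1) v \<le> \<pi>0"
      using vertex sum_incidence_coeff_tied_arcs_le assms(2) by (fastforce simp: V_def)
    show "char_vec n W0 \<in> V" "char_vec n (rank_order n id) \<in> V"
      using W0(1) weak_order_rank_order by (auto simp: V_def)
    show "lin_form (arcs n) (incidence_coeff i1) (char_vec n W0) = \<pi>0"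
      using vertex[OF W0(1)] W0(2) by simp
    show "lin_form (arcs n) (incidence_coeff i1) (char_vec n (rank_order n id)) \<noteq> \<pi>0"
      using vertex[OF weak_order_rank_order] by (simp add: tied_arcs_rank_order_id)
    fix c c0
    assume "\<forall>v\<in>V. lin_form (arcs n) (incidence_coeff i1) v = \<pi>0 \<longrightarrow> lin_form (arcs n) c v = c0"
    then show "\<exists>l. \<forall>a\<in>arcs n. c a = l * incidence_coeff i1 a"
      using assms vertex by (intro face_equation_proportional[of i1 n]) (auto simp: V_def)
  qed
  then show ?thesis by (simp add: \<pi>0_def V_def weak_order_polytope_def incidence_coeff_def)
qed

end
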